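(* Let $1\le s\le n-1$ and ${\bf v}^s=(\frac1s,\dots,\frac1s,0,\dots,0)$ (with $s$ prizes equal to $1/s$). If $s<n/2$, then $M({\bf v}^s,\theta)$ and hence the equilibrium effort $x^*({\bf v}^s,\theta)$ are decreasing in $\theta\in[0,1]$; if $s>n/2$, they are increasing in $\theta\in[0,1]$.
   Context: Fix an integer $n\ge 2$ and a noise distribution with cdf $F$ and density $f$ on $\mathbb R$ (integrals finite). For $r=1,\dots,n$ let $g_r(u)=u^{n-r}(1-u)^{r-1}$ and $\beta_r=\binom{n-1}{r-1}\int g_r'(F(t))f(t)^2dt$; $B_r=\sum_{k=1}^r\beta_k$, which for $1\le r\le n-1$ equals $r\binom{n-1}{r}\int F(t)^{n-1-r}[1-F(t)]^{r-1}f(t)^2dt>0$. For prize vectors ${\bf v}$ ($v_1\ge\dots\ge v_n\ge0$, $\sum v_r=1$) let $R({\bf v})=\sum_r\beta_rv_r$, $L({\bf v})=-\frac1n\sum_{r=1}^n\sum_{s<r}(\beta_r+\beta_s)(v_s-v_r)$, $M({\bf v},\theta)=R({\bf v})+\theta L({\bf v})$, $\theta\in[0,1]$. The effort cost $c$ is strictly increasing, differentiable and strictly convex on $[0,\bar x]$, $\bar x=c^{-1}(1)$, with $c(0)=c'(0)=0$; the symmetric equilibrium effort $x^*({\bf v},\theta)$ solves $c'(x^* )=M({\bf v},\theta)$. *)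

theory Defs
  imports "HOL-Analysis.Analysis"
begin

definition strict_convex_on_real :: "real set \<Rightarrow> (real \<Rightarrow> real) \<Rightarrow> bool" where
  "strict_convex_on_real S c \<longleftrightarrow>
     (\<forall>x\<in>S. \<forall>y\<in>S. x \<noteq> y \<longrightarrow>
        (\<forall>t. 0 < t \<and> t < 1 \<longrightarrow> c ((1 - t) * x + t * y) < (1 - t) * c x + t * c y))"

definition g :: "nat \<Rightarrow> nat \<Rightarrow> real \<Rightarrow> real" where
  "g n r u = u ^ (n - r) * (1 - u) ^ (r - 1)"

definition beta :: "nat \<Rightarrow> (real \<Rightarrow> real) \<Rightarrow> (real \<Rightarrow> real) \<Rightarrow> nat \<Rightarrow> real" where
  "beta n F f r = real ((n - 1) choose (r - 1)) *
     (\<integral>t. deriv (g n r) (F t) * (f t)\<^sup>2 \<partial>lborel)"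

definition R :: "nat \<Rightarrow> (real \<Rightarrow> real) \<Rightarrow> (real \<Rightarrow> real) \<Rightarrow> (nat \<Rightarrow> real) \<Rightarrow> real" where
  "R n F f v = (\<Sum>r=1..n. beta n F f r * v r)"

definition L :: "nat \<Rightarrow> (real \<Rightarrow> real) \<Rightarrow> (real \<Rightarrow> real) \<Rightarrow> (nat \<Rightarrow> real) \<Rightarrow> real" where
  "L n F f v = - (1 / real n) *
     (\<Sum>r=1..n. \<Sum>q=1..<r. (beta n F f r + beta n F f q) * (v q - v r))"

definition M :: "nat \<Rightarrow> (real \<Rightarrow> real) \<Rightarrow> (real \<Rightarrow> real) \<Rightarrow> (nat \<Rightarrow> real) \<Rightarrow> real \<Rightarrow> real" where
  "M n F f v \<theta> = R n F f v + \<theta> * L n F f v"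

definition vs :: "nat \<Rightarrow> nat \<Rightarrow> real" where
  "vs s r = (if 1 \<le> r \<and> r \<le> s then 1 / real s else 0)"

end

theory Submission
  imports Defs
begin

text \<open>With K_r(u) = r C(n-1,r) u^(n-1-r) (1-u)^(r-1), the terms C(n-1,r-1) g_r'(u)
  telescope to K_r(u) - K_(r-1)(u), so B_r = \<integral> K_r(F) f^2. Hence B_n = 0, while B_s > 0 for
  1 \<le> s < n because f vanishes almost everywhere on every level set of F. For v^s this gives
  R = B_s/s and L = (2s - n) B_s/(n s), so M(v^s, \<theta>) is affine in \<theta> with a slope of the
  sign of 2s - n. Convexity of c makes c' monotone, so the equilibrium effort moves with M.\<close>

lemma strict_convex_on_real_imp_convex_on:
  assumes "convex S" "strict_convex_on_real S c"
  shows "convex_on S c"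
proof (rule convex_onI)
  fix t x y :: real assume "0 < t" "t < 1" "x \<in> S" "y \<in> S"
  with assms(2) show "c ((1 - t) *\<^sub>R x + t *\<^sub>R y) \<le> (1 - t) * c x + t * c y"
    unfolding strict_convex_on_real_def
    by (cases "x = y") (simp add: algebra_simps, metis less_eq_real_def real_scaleR_def)
qed (rule assms(1))

lemma convex_on_deriv_le_slope:
  fixes f :: "real \<Rightarrow> real"
  assumes f: "convex_on I f" and xy: "x \<in> I" "y \<in> I" "x < y"
    and der: "(f has_real_derivative f') (at x within I)"
  shows "f' \<le> (f y - f x) / (y - x)"
proof (rule tendsto_upperbound)
  have "{x..y} \<subseteq> I"
    using closed_segment_subset[OF xy(1,2)] f xy(3) by (simp add: convex_on_def closed_segment_eq_real_ivl)
  then show "((\<lambda>z. (f z - f x) / (z - x)) \<longlongrightarrow> f') (at_right x)"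
    using DERIV_subset[OF der] xy(3) by (simp add: has_field_derivative_iff flip: at_within_Icc_at_right)
  show "\<forall>\<^sub>F z in at_right x. (f z - f x) / (z - x) \<le> (f y - f x) / (y - x)"
    using eventually_at_right_real[OF xy(3)]
  proof eventually_elim
    case (elim z)
    then show ?case
      using convex_on_slope_le(1)[OF f xy(1,2), of z]
      by (simp add: minus_divide_divide[of "f z - f x" "z - x", symmetric]
          minus_divide_divide[of "f y - f x" "y - x", symmetric])
  qed
qed simp

lemma convex_on_slope_le_deriv:
  fixes f :: "real \<Rightarrow> real"
  assumes f: "convex_on I f" and xy: "x \<in> I" "y \<in> I" "x < y"
    and der: "(f has_real_derivative f') (at y within I)"
  shows "(f y - f x) / (y - x) \<le> f'"
proof (rule tendsto_lowerbound)
  have "{x..y} \<subseteq> I"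
    using closed_segment_subset[OF xy(1,2)] f xy(3) by (simp add: convex_on_def closed_segment_eq_real_ivl)
  then show "((\<lambda>z. (f z - f y) / (z - y)) \<longlongrightarrow> f') (at_left y)"
    using DERIV_subset[OF der] xy(3) by (simp add: has_field_derivative_iff flip: at_within_Icc_at_left)
  show "\<forall>\<^sub>F z in at_left y. (f y - f x) / (y - x) \<le> (f z - f y) / (z - y)"
    using eventually_at_left_real[OF xy(3)]
  proof eventually_elim
    case (elim z)
    then show ?case
      using convex_on_slope_le(2)[OF f xy(1,2), of z]
      by (simp add: minus_divide_divide[of "f z - f y" "z - y", symmetric]
          minus_divide_divide[of "f y - f x" "y - x", symmetric])
  qed
qed simp

lemma convex_on_deriv_mono_on:
  fixes f f' :: "real \<Rightarrow> real"
  assumes f: "convex_on I f"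
    and der: "\<And>x. x \<in> I \<Longrightarrow> (f has_real_derivative f' x) (at x within I)"
  shows "mono_on I f'"
proof (rule mono_onI)
  fix x y assume xy: "x \<in> I" "y \<in> I" "x \<le> y"
  show "f' x \<le> f' y"
  proof (cases "x = y")
    case False
    with xy have "x < y" by simp
    from convex_on_deriv_le_slope[OF f xy(1,2) this der] convex_on_slope_le_deriv[OF f xy(1,2) this der]
    show ?thesis using xy by linarith
  qed simp
qed

text \<open>Truncated subtraction is harmless here: an exponent is truncated only when the
  coefficient in front of it is zero.\<close>
definition g_deriv :: "nat \<Rightarrow> nat \<Rightarrow> real \<Rightarrow> real" where
  "g_deriv n r u = real (n - r) * u ^ (n - r - 1) * (1 - u) ^ (r - 1)
     - real (r - 1) * u ^ (n - r) * (1 - u) ^ (r - 2)"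

lemma has_real_derivative_g: "(g n r has_real_derivative g_deriv n r u) (at u)"
proof -
  have g: "g n r = (\<lambda>u. u ^ (n - r) * (1 - u) ^ (r - 1))" by (simp add: g_def fun_eq_iff)
  show ?thesis
    unfolding g g_deriv_def
    by (rule derivative_eq_intros refl | simp)+ (simp add: algebra_simps numeral_2_eq_2 diff_diff_left)
qed

lemma deriv_g: "deriv (g n r) = g_deriv n r"
  using has_real_derivative_g DERIV_imp_deriv by blast

text \<open>The integrand K_k of the partial sum B_k = beta_1 + ... + beta_k.\<close>
definition cum_beta_kernel :: "nat \<Rightarrow> nat \<Rightarrow> real \<Rightarrow> real" where
  "cum_beta_kernel n k u = real k * real ((n - 1) choose k) * u ^ (n - 1 - k) * (1 - u) ^ (k - 1)"

lemma choose_pred_mult_diff: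
  assumes "1 \<le> r"
  shows "real ((n - 1) choose (r - 1)) * real (n - r) = real r * real ((n - 1) choose r)"
proof -
  have "(n - 1 - (r - 1)) * ((n - 1) choose (r - 1)) = Suc (r - 1) * ((n - 1) choose Suc (r - 1))"
    by (simp only: binomial_absorb_comp binomial_absorption)
  moreover have "Suc (r - 1) = r" "n - 1 - (r - 1) = n - r" using assms by auto
  ultimately show ?thesis by (metis mult.commute of_nat_mult)
qed

lemma choose_g_deriv_telescope:
  assumes "1 \<le> r"
  shows "real ((n - 1) choose (r - 1)) * g_deriv n r u
    = cum_beta_kernel n r u - cum_beta_kernel n (r - 1) u"
proof -
  have "n - 1 - (r - 1) = n - r" "r - 1 - 1 = r - 2" "n - r - 1 = n - 1 - r" using assms by auto
  then show ?thesis
    unfolding g_deriv_def cum_beta_kernel_def right_diff_distrib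
    using choose_pred_mult_diff[OF assms, of n] by (simp add: algebra_simps)
qed

lemma sum_choose_g_deriv:
  "(\<Sum>r=1..k. real ((n - 1) choose (r - 1)) * g_deriv n r u) = cum_beta_kernel n k u"
proof (induction k)
  case 0
  then show ?case by (simp add: cum_beta_kernel_def)
next
  case (Suc k)
  then show ?case using choose_g_deriv_telescope[of "Suc k" n u] by simp
qed

lemma cum_beta_kernel_top: "cum_beta_kernel n n u = 0"
  by (cases n) (simp_all add: cum_beta_kernel_def)

lemma sum_mult_vs:
  assumes "1 \<le> s" "s \<le> n"
  shows "(\<Sum>r=1..n. b r * vs s r) = (\<Sum>r=1..s. b r) / real s"
proof -
  have "(\<Sum>r=1..n. b r * vs s r) = (\<Sum>r=1..s. b r * (1 / real s))"
    using assms by (intro sum.mono_neutral_cong_right) (auto simp: vs_def)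
  then show ?thesis by (simp add: sum_divide_distrib)
qed

lemma sum_pairs_vs:
  fixes b :: "nat \<Rightarrow> real"
  assumes s: "1 \<le> s" "s < n"
  shows "(\<Sum>r=1..n. \<Sum>q=1..<r. (b r + b q) * (vs s q - vs s r))
     = (\<Sum>r=1..n. b r) - (\<Sum>r=1..s. b r) + real (n - s) * (\<Sum>r=1..s. b r) / real s"
proof -
  have split: "{1..n} = {1..s} \<union> {s<..n}" using s by auto
  have top: "(\<Sum>r\<in>{1..s}. \<Sum>q=1..<r. (b r + b q) * (vs s q - vs s r)) = 0"
    by (intro sum.neutral ballI) (auto simp: vs_def)
  have bottom: "(\<Sum>q=1..<r. (b r + b q) * (vs s q - vs s r)) = b r + (\<Sum>q=1..s. b q) / real s"
    if r: "r \<in> {s<..n}" for r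
  proof -
    have "(\<Sum>q=1..<r. (b r + b q) * (vs s q - vs s r)) = (\<Sum>q=1..<r. (b r + b q) * vs s q)"
      using r by (intro sum.cong) (auto simp: vs_def)
    also have "\<dots> = (\<Sum>q=1..s. (b r + b q)) / real s"
    proof -
      have "{1..<r} = {1..r - 1}" using r by auto
      moreover have "s \<le> r - 1" using r by auto
      ultimately show ?thesis using s sum_mult_vs[of s "r - 1" "\<lambda>q. b r + b q"] by simp
    qed
    also have "\<dots> = b r + (\<Sum>q=1..s. b q) / real s"
      using s by (simp add: sum.distrib add_divide_distrib)
    finally show ?thesis .
  qed
  have "(\<Sum>r=1..n. \<Sum>q=1..<r. (b r + b q) * (vs s q - vs s r))
      = (\<Sum>r\<in>{s<..n}. b r + (\<Sum>q=1..s. b q) / real s)"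
    unfolding split using top bottom by (subst sum.union_disjoint) auto
  also have "\<dots> = (\<Sum>r\<in>{s<..n}. b r) + real (n - s) * (\<Sum>q=1..s. b q) / real s"
    by (simp add: sum.distrib)
  also have "(\<Sum>r\<in>{s<..n}. b r) = (\<Sum>r=1..n. b r) - (\<Sum>r=1..s. b r)"
    unfolding split by (subst sum.union_disjoint) auto
  finally show ?thesis by simp
qed

lemma M_vs_affine:
  assumes s: "1 \<le> s" "s < n" and total: "(\<Sum>r=1..n. beta n F f r) = 0"
  defines "B \<equiv> \<Sum>r=1..s. beta n F f r"
  shows "M n F f (vs s) \<theta> = B / real s + \<theta> * ((2 * real s - real n) * B / (real n * real s))"
proof -
  have "R n F f (vs s) = B / real s"
    unfolding R_def B_def using sum_mult_vs s by simp
  moreover have "L n F f (vs s) = (2 * real s - real n) * B / (real n * real s)"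
    using s unfolding L_def sum_pairs_vs[OF s] total B_def[symmetric]
    by (simp add: of_nat_diff field_simps)
  ultimately show ?thesis unfolding M_def by simp
qed

locale cdf_density =
  fixes F f :: "real \<Rightarrow> real"
  assumes f_meas [measurable]: "f \<in> borel_measurable lborel"
    and f_nonneg: "\<forall>t. 0 \<le> f t"
    and f_int: "integrable lborel f"
    and f_total: "(\<integral>t. f t \<partial>lborel) = 1"
    and F_cdf: "\<forall>x. F x = (LINT t:{..x}|lborel. f t)"
begin

lemma F_eq_integral: "F x = (\<integral>t. indicator {..x} t * f t \<partial>lborel)"
  using F_cdf by (simp add: set_lebesgue_integral_def)

lemma integrable_indicator_f: "A \<in> sets lborel \<Longrightarrow> integrable lborel (\<lambda>t. indicator A t * f t)"
  using integrable_mult_indicator[OF _ f_int] by simp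

lemma F_nonneg: "0 \<le> F x"
  unfolding F_eq_integral by (rule integral_nonneg_AE) (simp add: f_nonneg)

lemma F_le_1: "F x \<le> 1"
proof -
  have "F x \<le> (\<integral>t. f t \<partial>lborel)"
    unfolding F_eq_integral
    by (rule integral_mono[OF integrable_indicator_f f_int]) (auto simp: f_nonneg indicator_def)
  then show ?thesis using f_total by simp
qed

lemma F_diff_eq_integral:
  assumes "p \<le> q"
  shows "F q - F p = (\<integral>t. indicator {p<..q} t * f t \<partial>lborel)"
proof -
  have "F q - F p = (\<integral>t. indicator {..q} t * f t - indicator {..p} t * f t \<partial>lborel)"
    unfolding F_eq_integral by (simp add: integrable_indicator_f)
  also have "\<dots> = (\<integral>t. indicator {p<..q} t * f t \<partial>lborel)"
    using assms by (intro Bochner_Integration.integral_cong) (auto simp: indicator_def)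
  finally show ?thesis .
qed

lemma F_mono: "mono F"
proof (rule monoI)
  fix p q :: real assume "p \<le> q"
  then have "0 \<le> F q - F p"
    by (simp only: F_diff_eq_integral) (rule integral_nonneg_AE, simp add: f_nonneg)
  then show "F p \<le> F q" by simp
qed

lemma F_measurable [measurable]: "F \<in> borel_measurable lborel"
  using borel_measurable_mono[OF F_mono] by simp

lemma AE_density_zero_on_level_set: "AE t in lborel. F t = c \<longrightarrow> f t = 0"
proof -
  define Z where "Z = {t. F t = c}"
  have Z_interval: "y \<in> Z" if "x \<in> Z" "z \<in> Z" "x \<le> y" "y \<le> z" for x y z
    using that monoD[OF F_mono, of x y] monoD[OF F_mono, of y z] by (simp add: Z_def)
  define P where "P = {(p, q). p \<in> \<rat> \<and> q \<in> \<rat> \<and> p \<in> Z \<and> q \<in> Z}"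
  have "countable P"
    by (rule countable_subset[of _ "\<rat> \<times> \<rat>"]) (auto simp: P_def countable_rat)
  moreover have "AE t in lborel. t \<in> {p<..q} \<longrightarrow> f t = 0" if "(p, q) \<in> P" for p q
  proof (cases "p \<le> q")
    case True
    have "(\<integral>t. indicator {p<..q} t * f t \<partial>lborel) = 0"
      using that F_diff_eq_integral[OF True] by (simp add: P_def Z_def)
    then have "AE t in lborel. indicator {p<..q} t * f t = 0"
      by (subst integral_nonneg_eq_0_iff_AE[symmetric])
        (auto simp: integrable_indicator_f f_nonneg)
    then show ?thesis by eventually_elim (auto simp: indicator_def)
  qed simp
  ultimately have pairs: "AE t in lborel. \<forall>(p, q)\<in>P. t \<in> {p<..q} \<longrightarrow> f t = 0"
    by (subst AE_ball_countable') auto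
  define E where "E = {t \<in> Z. \<forall>t'\<in>Z. t' \<le> t} \<union> {t \<in> Z. \<forall>t'\<in>Z. t \<le> t'}"
  have "E \<subseteq> {Inf Z, Sup Z}"
    unfolding E_def using cSup_eq_maximum cInf_eq_minimum by blast
  then have "finite E"
    by (rule finite_subset) simp
  then have "AE t in lborel. t \<notin> E"
    by (intro AE_not_in finite_imp_null_set_lborel)
  with pairs show ?thesis
  proof eventually_elim
    case (elim t)
    show ?case
    proof
      assume "F t = c"
      with elim(2) obtain a b where ab: "a \<in> Z" "a < t" "b \<in> Z" "t < b"
        by (auto simp: E_def Z_def not_le)
      obtain p q where p: "p \<in> \<rat>" "a < p" "p < t" and q: "q \<in> \<rat>" "t < q" "q < b"
        using Rats_dense_in_real[OF ab(2)] Rats_dense_in_real[OF ab(4)] by blast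
      have "t \<in> Z" using \<open>F t = c\<close> by (simp add: Z_def)
      then have "p \<in> Z" "q \<in> Z"
        using Z_interval p q ab by (meson less_imp_le)+
      with p q have "(p, q) \<in> P" by (simp add: P_def)
      with elim(1) p q show "f t = 0" by auto
    qed
  qed
qed

lemma integrable_comp_F_mult_square:
  assumes f2: "integrable lborel (\<lambda>t. (f t)\<^sup>2)" and h: "continuous_on UNIV h"
  shows "integrable lborel (\<lambda>t. h (F t) * (f t)\<^sup>2)"
proof -
  have "bounded (h ` {0..1})"
    using h by (intro compact_imp_bounded compact_continuous_image) (auto intro: continuous_on_subset)
  then obtain C where C: "\<And>u. u \<in> {0..1} \<Longrightarrow> \<bar>h u\<bar> \<le> C"
    unfolding bounded_iff by (auto simp del: atLeastAtMost_iff)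
  have [measurable]: "h \<in> borel_measurable borel"
    using h by (rule borel_measurable_continuous_onI)
  show ?thesis
  proof (rule Bochner_Integration.integrable_bound)
    show "integrable lborel (\<lambda>t. C * (f t)\<^sup>2)" using f2 by simp
    show "AE t in lborel. norm (h (F t) * (f t)\<^sup>2) \<le> norm (C * (f t)\<^sup>2)"
    proof (rule AE_I2)
      fix t
      have "\<bar>h (F t)\<bar> \<le> C" using C F_nonneg F_le_1 by simp
      then show "norm (h (F t) * (f t)\<^sup>2) \<le> norm (C * (f t)\<^sup>2)"
        by (simp add: abs_mult mult_right_mono)
    qed
  qed measurable
qed

lemma integral_F_power_pos:
  assumes f2: "integrable lborel (\<lambda>t. (f t)\<^sup>2)"
  shows "0 < (\<integral>t. F t ^ a * (1 - F t) ^ b * (f t)\<^sup>2 \<partial>lborel)"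
proof -
  have int: "integrable lborel (\<lambda>t. F t ^ a * (1 - F t) ^ b * (f t)\<^sup>2)"
    using integrable_comp_F_mult_square[OF f2, of "\<lambda>u. u ^ a * (1 - u) ^ b"]
    by (simp add: continuous_intros)
  have nonneg: "\<And>t. 0 \<le> F t ^ a * (1 - F t) ^ b * (f t)\<^sup>2"
    using F_nonneg F_le_1 by simp
  have int_nonneg: "0 \<le> (\<integral>t. F t ^ a * (1 - F t) ^ b * (f t)\<^sup>2 \<partial>lborel)"
    by (rule integral_nonneg_AE) (simp add: nonneg)
  show ?thesis
  proof (rule ccontr)
    assume "\<not> ?thesis"
    with int_nonneg have "(\<integral>t. F t ^ a * (1 - F t) ^ b * (f t)\<^sup>2 \<partial>lborel) = 0"
      by simp
    then have "AE t in lborel. F t ^ a * (1 - F t) ^ b * (f t)\<^sup>2 = 0"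
      using integral_nonneg_eq_0_iff_AE[OF int] nonneg by simp
    with AE_density_zero_on_level_set[of 0] AE_density_zero_on_level_set[of 1]
    have "AE t in lborel. f t = 0"
      by eventually_elim auto
    then have "(\<integral>t. f t \<partial>lborel) = 0" by (simp add: integral_eq_zero_AE)
    with f_total show False by simp
  qed
qed

lemma sum_beta_eq_integral:
  assumes f2: "integrable lborel (\<lambda>t. (f t)\<^sup>2)"
  shows "(\<Sum>r=1..k. beta n F f r) = (\<integral>t. cum_beta_kernel n k (F t) * (f t)\<^sup>2 \<partial>lborel)"
proof -
  have int: "integrable lborel (\<lambda>t. real ((n - 1) choose (r - 1)) * g_deriv n r (F t) * (f t)\<^sup>2)" for r
    using integrable_comp_F_mult_square[OF f2, of "\<lambda>u. real ((n - 1) choose (r - 1)) * g_deriv n r u"]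
    by (simp add: g_deriv_def continuous_intros mult.assoc)
  have "(\<Sum>r=1..k. beta n F f r)
      = (\<Sum>r=1..k. \<integral>t. real ((n - 1) choose (r - 1)) * g_deriv n r (F t) * (f t)\<^sup>2 \<partial>lborel)"
    unfolding beta_def deriv_g by (simp add: mult.assoc)
  also have "\<dots> = (\<integral>t. (\<Sum>r=1..k. real ((n - 1) choose (r - 1)) * g_deriv n r (F t) * (f t)\<^sup>2) \<partial>lborel)"
    by (rule Bochner_Integration.integral_sum[symmetric]) (rule int)
  also have "\<dots> = (\<integral>t. (\<Sum>r=1..k. real ((n - 1) choose (r - 1)) * g_deriv n r (F t)) * (f t)\<^sup>2 \<partial>lborel)"
    by (simp add: sum_distrib_right)
  also have "\<dots> = (\<integral>t. cum_beta_kernel n k (F t) * (f t)\<^sup>2 \<partial>lborel)"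
    by (simp only: sum_choose_g_deriv)
  finally show ?thesis .
qed

lemma sum_beta_total:
  assumes "integrable lborel (\<lambda>t. (f t)\<^sup>2)"
  shows "(\<Sum>r=1..n. beta n F f r) = 0"
  using sum_beta_eq_integral[OF assms] by (simp add: cum_beta_kernel_top)

lemma sum_beta_pos:
  assumes f2: "integrable lborel (\<lambda>t. (f t)\<^sup>2)" and s: "1 \<le> s" "s < n"
  shows "0 < (\<Sum>r=1..s. beta n F f r)"
proof -
  have "(\<Sum>r=1..s. beta n F f r) = real s * real ((n - 1) choose s)
      * (\<integral>t. F t ^ (n - 1 - s) * (1 - F t) ^ (s - 1) * (f t)\<^sup>2 \<partial>lborel)"
    unfolding sum_beta_eq_integral[OF f2] cum_beta_kernel_def by (simp add: mult.assoc)
  moreover have "0 < real s * real ((n - 1) choose s)" using s by simp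
  ultimately show ?thesis using integral_F_power_pos[OF f2] by simp
qed

end

theorem corollary1:
  fixes n s :: nat and F f c c' :: "real \<Rightarrow> real" and xbar :: real
  assumes n2: "n \<ge> 2"
    and s_range: "1 \<le> s" "s \<le> n - 1"
    and f_meas: "f \<in> borel_measurable lborel"
    and f_nonneg: "\<forall>t. 0 \<le> f t"
    and f_int: "integrable lborel f"
    and f_total: "(\<integral>t. f t \<partial>lborel) = 1"
    and F_cdf: "\<forall>x. F x = (LINT t:{..x}|lborel. f t)"
    and f2_int: "integrable lborel (\<lambda>t. (f t)\<^sup>2)"
    and xbar_pos: "0 < xbar"
    and c_mono: "strict_mono_on {0..xbar} c"
    and c_deriv: "\<forall>x\<in>{0..xbar}. (c has_real_derivative c' x) (at x within {0..xbar})"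
    and c_convex: "strict_convex_on_real {0..xbar} c"
    and c0: "c 0 = 0" and c'0: "c' 0 = 0"
    and c_xbar: "c xbar = 1"
  shows
    "(2 * s < n \<longrightarrow>
        strict_antimono_on {0..1} (M n F f (vs s)) \<and>
        (\<forall>\<theta>1 \<theta>2 x1 x2. \<theta>1 \<in> {0..1} \<and> \<theta>2 \<in> {0..1} \<and> \<theta>1 < \<theta>2 \<and>
           x1 \<in> {0..xbar} \<and> x2 \<in> {0..xbar} \<and>
           c' x1 = M n F f (vs s) \<theta>1 \<and> c' x2 = M n F f (vs s) \<theta>2 \<longrightarrow> x2 < x1))
     \<and>
     (2 * s > n \<longrightarrow>
        strict_mono_on {0..1} (M n F f (vs s)) \<and>
        (\<forall>\<theta>1 \<theta>2 x1 x2. \<theta>1 \<in> {0..1} \<and> \<theta>2 \<in> {0..1} \<and> \<theta>1 < \<theta>2 \<and>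
           x1 \<in> {0..xbar} \<and> x2 \<in> {0..xbar} \<and>
           c' x1 = M n F f (vs s) \<theta>1 \<and> c' x2 = M n F f (vs s) \<theta>2 \<longrightarrow> x1 < x2))"
proof -
  interpret cdf_density F f using f_meas f_nonneg f_int f_total F_cdf by unfold_locales
  have s: "1 \<le> s" "s < n" using s_range n2 by auto
  define B where "B = (\<Sum>r=1..s. beta n F f r)"
  define K where "K = (2 * real s - real n) * B / (real n * real s)"
  have M_eq: "M n F f (vs s) = (\<lambda>\<theta>. B / real s + \<theta> * K)"
    using M_vs_affine[OF s sum_beta_total[OF f2_int]] by (simp add: B_def K_def fun_eq_iff)
  have "0 < B" unfolding B_def using sum_beta_pos[OF f2_int s] .
  have c'_mono: "mono_on {0..xbar} c'"
    using convex_on_deriv_mono_on[OF strict_convex_on_real_imp_convex_on[OF _ c_convex]] c_deriv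
    by blast
  show ?thesis
  proof (intro conjI impI)
    assume "2 * s < n"
    with \<open>0 < B\<close> s have "K < 0" unfolding K_def by (intro divide_neg_pos mult_neg_pos) auto
    then show anti: "strict_antimono_on {0..1} (M n F f (vs s))"
      unfolding M_eq by (intro monotone_onI) (simp add: mult_strict_right_mono_neg)
    show "\<forall>\<theta>1 \<theta>2 x1 x2. \<theta>1 \<in> {0..1} \<and> \<theta>2 \<in> {0..1} \<and> \<theta>1 < \<theta>2 \<and>
           x1 \<in> {0..xbar} \<and> x2 \<in> {0..xbar} \<and>
           c' x1 = M n F f (vs s) \<theta>1 \<and> c' x2 = M n F f (vs s) \<theta>2 \<longrightarrow> x2 < x1"
      using mono_on_strict_invE[OF c'_mono] monotone_onD[OF anti] by metis
  next
    assume "2 * s > n"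
    with \<open>0 < B\<close> s have "K > 0" unfolding K_def by (intro divide_pos_pos mult_pos_pos) auto
    then show mono: "strict_mono_on {0..1} (M n F f (vs s))"
      unfolding M_eq by (intro monotone_onI) (simp add: mult_strict_right_mono)
    show "\<forall>\<theta>1 \<theta>2 x1 x2. \<theta>1 \<in> {0..1} \<and> \<theta>2 \<in> {0..1} \<and> \<theta>1 < \<theta>2 \<and>
           x1 \<in> {0..xbar} \<and> x2 \<in> {0..xbar} \<and>
           c' x1 = M n F f (vs s) \<theta>1 \<and> c' x2 = M n F f (vs s) \<theta>2 \<longrightarrow> x1 < x2"
      using mono_on_strict_invE[OF c'_mono] monotone_onD[OF mono] by metis
  qed
qed

end
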